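(* Let $\alpha\in(0,1)\cup(1,\infty)$ and let $\rho_{XABC}=\sum_x p_X(x)|x\rangle\langle x|_X\otimes\rho^x_{ABC}$, where $p_X$ is a probability distribution on a finite set, $\{|x\rangle\}$ is orthonormal, and each $\rho^x_{ABC}$ is a state on a finite-dimensional $\mathcal{H}_A\otimes\mathcal{H}_B\otimes\mathcal{H}_C$. Then $$I_\alpha(A;B|CX)_\rho=\frac{\alpha}{\alpha-1}\log\sum_x p_X(x)\exp\Big\{\Big(\frac{\alpha-1}{\alpha}\Big)I_\alpha(A;B|C)_{\rho^x}\Big\}.$$
   Context: $\log$ is the natural logarithm. For a positive semi-definite $M$ and function $f$, $f(M)$ applies $f$ only to nonzero eigenvalues (negative powers are generalized inverses on the support). For a state $\rho_{ABE}$ and $\alpha\in(0,1)\cup(1,\infty)$, $$I_\alpha(A;B|E)_\rho=\frac{\alpha}{\alpha-1}\log\mathrm{Tr}\Big\{\Big(\rho_E^{(\alpha-1)/2}\,\mathrm{Tr}_A\big\{\rho_{AE}^{(1-\alpha)/2}\rho_{ABE}^{\alpha}\rho_{AE}^{(1-\alpha)/2}\big\}\,\rho_E^{(\alpha-1)/2}\Big)^{1/\alpha}\Big\},$$ with the conditioning system $E$ taken to be the composite $CX$ on the left-hand side. *)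

theory Defs
  imports "HOL-Analysis.Analysis"
begin

text \<open>Finite-dimensional quantum systems: a system with orthonormal basis indexed by a
finite type 'n; operators are matrices complex^'n^'n (in that basis).  Composite systems
are indexed by product types (tensor product).\<close>

type_synonym 'n op = "complex^'n^'n"

definition adj :: "'n::finite op \<Rightarrow> 'n op" where
  "adj M = (\<chi> i j. cnj (M $ j $ i))"

definition unitary :: "'n::finite op \<Rightarrow> bool" where
  "unitary U \<longleftrightarrow> U ** adj U = mat 1 \<and> adj U ** U = mat 1"

definition hermitian :: "'n::finite op \<Rightarrow> bool" where
  "hermitian M \<longleftrightarrow> adj M = M"

definition psd :: "'n::finite op \<Rightarrow> bool" where
  "psd M \<longleftrightarrow> hermitian M \<and>
     (\<forall>v::complex^'n. 0 \<le> Re (\<Sum>i\<in>UNIV. \<Sum>j\<in>UNIV. cnj (v $ i) * M $ i $ j * v $ j))"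

definition mtrace :: "'n::finite op \<Rightarrow> complex" where
  "mtrace M = (\<Sum>i\<in>UNIV. M $ i $ i)"

definition qstate :: "'n::finite op \<Rightarrow> bool" where
  "qstate M \<longleftrightarrow> psd M \<and> mtrace M = 1"

definition rdiag :: "('n::finite \<Rightarrow> real) \<Rightarrow> 'n op" where
  "rdiag d = (\<chi> i j. if i = j then complex_of_real (d i) else 0)"

text \<open>Functional calculus: for a PSD (Hermitian) M = U diag(d) U*, f(M) applies f only to the
nonzero eigenvalues (zero eigenvalues are mapped to 0), i.e. f acts on the support.\<close>
definition mfun :: "(real \<Rightarrow> real) \<Rightarrow> 'n::finite op \<Rightarrow> 'n op" where
  "mfun f M = (SOME N. \<exists>U d. unitary U \<and> M = U ** rdiag d ** adj U \<and>
       N = U ** rdiag (\<lambda>i. if d i = 0 then 0 else f (d i)) ** adj U)"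

definition mpow :: "'n::finite op \<Rightarrow> real \<Rightarrow> 'n op" where
  "mpow M p = mfun (\<lambda>x. x powr p) M"

definition ptrB :: "('a::finite \<times> 'b::finite \<times> 'e::finite) op \<Rightarrow> ('a \<times> 'e) op" where
  "ptrB M = (\<chi> i j. case (i, j) of ((a,e), (a',e')) \<Rightarrow> \<Sum>b\<in>UNIV. M $ (a,b,e) $ (a',b,e'))"

definition ptrA_ABE :: "('a::finite \<times> 'b::finite \<times> 'e::finite) op \<Rightarrow> ('b \<times> 'e) op" where
  "ptrA_ABE M = (\<chi> i j. case (i, j) of ((b,e), (b',e')) \<Rightarrow> \<Sum>a\<in>UNIV. M $ (a,b,e) $ (a,b',e'))"

definition ptrA :: "('a::finite \<times> 'e::finite) op \<Rightarrow> 'e op" where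
  "ptrA M = (\<chi> e e'. \<Sum>a\<in>UNIV. M $ (a,e) $ (a,e'))"

text \<open>P_{AE} \<otimes> I_B on A \<otimes> B \<otimes> E, and P_E \<otimes> I_B on B \<otimes> E.\<close>
definition extB :: "('a::finite \<times> 'e::finite) op \<Rightarrow> ('a \<times> 'b::finite \<times> 'e) op" where
  "extB P = (\<chi> i j. case (i, j) of ((a,b,e), (a',b',e')) \<Rightarrow> if b = b' then P $ (a,e) $ (a',e') else 0)"

definition extB' :: "'e::finite op \<Rightarrow> ('b::finite \<times> 'e) op" where
  "extB' P = (\<chi> i j. case (i, j) of ((b,e), (b',e')) \<Rightarrow> if b = b' then P $ e $ e' else 0)"

definition renyi_cmi :: "real \<Rightarrow> ('a::finite \<times> 'b::finite \<times> 'e::finite) op \<Rightarrow> real" where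
  "renyi_cmi \<alpha> \<rho> =
    (let \<rho>AE = ptrB \<rho>; \<rho>E = ptrA \<rho>AE;
         inner = ptrA_ABE (extB (mpow \<rho>AE ((1 - \<alpha>) / 2)) ** mpow \<rho> \<alpha>
                             ** extB (mpow \<rho>AE ((1 - \<alpha>) / 2)))
                   :: ('b \<times> 'e) op;
         outer = extB' (mpow \<rho>E ((\<alpha> - 1) / 2)) ** inner ** extB' (mpow \<rho>E ((\<alpha> - 1) / 2))
     in \<alpha> / (\<alpha> - 1) * ln (Re (mtrace (mpow outer (1 / \<alpha>)))))"

text \<open>Classical-quantum state rho_{XABC} = sum_x p(x) |x><x| \<otimes> rho^x_{ABC}, arranged on
A \<otimes> B \<otimes> (C \<otimes> X) so that the conditioning system is E = CX.\<close>
definition cq_state :: "('x::finite \<Rightarrow> real) \<Rightarrow> ('x \<Rightarrow> ('a::finite \<times> 'b::finite \<times> 'c::finite) op)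
     \<Rightarrow> ('a \<times> 'b \<times> ('c \<times> 'x)) op" where
  "cq_state p \<rho>x = (\<chi> i j. case (i, j) of ((a,b,(c,x)), (a',b',(c',x'))) \<Rightarrow>
      if x = x' then complex_of_real (p x) * \<rho>x x $ (a,b,c) $ (a',b',c') else 0)"

end

theory Submission
  imports Defs
begin

text \<open>The cq state is block diagonal with respect to X, with blocks p(x) \<rho>^x.  Marginals,
  embeddings, products and matrix powers all respect this block structure, and a power of
  a block p(x) M is p(x)^s M^s; the four factors of p(x) collected in the sandwich defining
  I_\<alpha> multiply to p(x)^\<alpha>, so after the final 1/\<alpha>-th power the trace splits as
  \<Sum>_x p(x) T_x, where T_x is the trace inside the logarithm of I_\<alpha>(A;B|C) for \<rho>^x.
  It remains to see T_x > 0, so that exp and log cancel: the sandwiching operators act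
  invertibly on the supports of \<rho>_AE \<otimes> I_B and \<rho>_E \<otimes> I_AB, and these supports contain
  that of \<rho>^x, which is nonzero.  The functional calculus is justified by a spectral theorem
  for Hermitian matrices, proved by maximising the quadratic form on the unit sphere.\<close>

section \<open>Hermitian matrices and the spectral theorem\<close>

definition cinner :: "complex^'n::finite \<Rightarrow> complex^'n \<Rightarrow> complex" where
  "cinner v w = (\<Sum>i\<in>UNIV. cnj (v$i) * w$i)"

lemma cinner_cnj: "cnj (cinner v w) = cinner w v"
  by (simp add: cinner_def mult.commute)

lemma cinner_eq_0_sym: "cinner v w = 0 \<longleftrightarrow> cinner w v = 0"
  by (metis cinner_cnj complex_cnj_zero_iff)

lemma cinner_add_right: "cinner v (w + z) = cinner v w + cinner v z"
  by (simp add: cinner_def distrib_left sum.distrib)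

lemma cinner_add_left: "cinner (v + w) z = cinner v z + cinner w z"
  by (simp add: cinner_def distrib_right sum.distrib)

lemma cinner_diff_right: "cinner v (w - z) = cinner v w - cinner v z"
  by (simp add: cinner_def right_diff_distrib sum_subtractf)

lemma cinner_scale_right: "cinner v (c *s w) = c * cinner v w"
  by (simp add: cinner_def sum_distrib_left mult.left_commute)

lemma cinner_scale_left: "cinner (c *s v) w = cnj c * cinner v w"
  by (simp add: cinner_def sum_distrib_left mult.assoc)

lemma cinner_zero_right [simp]: "cinner v 0 = 0"
  by (simp add: cinner_def)

lemma cinner_sum_right: "cinner v (\<Sum>j\<in>A. f j) = (\<Sum>j\<in>A. cinner v (f j))"
  by (induct A rule: infinite_finite_induct) (simp_all add: cinner_add_right)

lemma cinner_self: "cinner v v = of_real ((norm v)\<^sup>2)"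
proof -
  have "(norm v)\<^sup>2 = (\<Sum>i\<in>UNIV. (cmod (v$i))\<^sup>2)"
    unfolding norm_vec_def L2_set_def by (rule real_sqrt_pow2) (simp add: sum_nonneg)
  moreover have "cinner v v = (\<Sum>i\<in>UNIV. of_real ((cmod (v$i))\<^sup>2))"
    unfolding cinner_def by (rule sum.cong) (simp_all only: complex_norm_square mult.commute)
  ultimately show ?thesis by (simp only: of_real_sum)
qed

lemma cinner_self_eq_0: "cinner v v = 0 \<longleftrightarrow> v = 0"
  by (simp add: cinner_self)

lemma cinner_adj: "cinner v (A *v w) = cinner (adj A *v v) w"
proof -
  have "cinner v (A *v w) = (\<Sum>i\<in>UNIV. \<Sum>j\<in>UNIV. cnj (v$i) * (A$i$j * w$j))"
    by (simp add: cinner_def matrix_vector_mult_def sum_distrib_left)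
  also have "\<dots> = (\<Sum>j\<in>UNIV. \<Sum>i\<in>UNIV. cnj (v$i) * (A$i$j * w$j))"
    by (rule sum.swap)
  also have "\<dots> = cinner (adj A *v v) w"
    unfolding cinner_def matrix_vector_mult_def adj_def vec_lambda_beta cnj_sum sum_distrib_right
    by (intro sum.cong refl) (simp add: mult_ac)
  finally show ?thesis .
qed

lemma cinner_hermitian: "hermitian M \<Longrightarrow> cinner v (M *v w) = cinner (M *v v) w"
  unfolding hermitian_def by (metis cinner_adj)

lemma continuous_on_cinner_right: "continuous_on UNIV (cinner u)"
  unfolding cinner_def by (intro continuous_intros)

lemma continuous_on_quadratic_form:
  "continuous_on UNIV (\<lambda>w. Re (cinner w (M *v (w::complex^'n::finite))))"
  unfolding cinner_def matrix_vector_mult_def by (intro continuous_intros)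

lemma psd_iff_cinner: "psd M \<longleftrightarrow> hermitian M \<and> (\<forall>v. 0 \<le> Re (cinner v (M *v v)))"
proof -
  have "(\<Sum>i\<in>UNIV. \<Sum>j\<in>UNIV. cnj (v $ i) * M $ i $ j * v $ j) = cinner v (M *v v)" for v
    by (simp add: cinner_def matrix_vector_mult_def sum_distrib_left mult_ac)
  thus ?thesis unfolding psd_def by simp
qed

lemma orthogonal_complement_subspace: "vec.subspace {w. \<forall>j\<in>J. cinner (u j) w = 0}"
  by (simp add: vec.subspace_def cinner_add_right cinner_scale_right)

lemma orthogonal_complement_closed: "closed {w. \<forall>j\<in>J. cinner (u j) w = 0}"
proof -
  have "closed {w. cinner (u j) w = 0}" for j
    using continuous_closed_preimage_constant[OF continuous_on_cinner_right closed_UNIV] by simp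
  thus ?thesis by (simp add: Collect_ball_eq closed_INT)
qed

lemma linear_le_quadratic_imp_zero:
  fixes a c :: real
  assumes "\<And>t. 2 * t * a \<le> t\<^sup>2 * c"
  shows "a = 0"
proof (rule ccontr)
  assume "a \<noteq> 0"
  define D where "D = \<bar>c\<bar> + 1"
  have "D > 0" unfolding D_def by simp
  have "2 * (a / D) * a \<le> (a / D)\<^sup>2 * c" by (rule assms)
  hence "2 * a\<^sup>2 * D \<le> a\<^sup>2 * c"
    using \<open>D > 0\<close> by (simp add: power2_eq_square field_simps)
  also have "\<dots> \<le> a\<^sup>2 * \<bar>c\<bar>" by (simp add: mult_left_mono)
  finally have "2 * D \<le> \<bar>c\<bar>" using \<open>a \<noteq> 0\<close> by (simp add: mult.assoc)
  thus False unfolding D_def by simp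
qed

lemma quadratic_form_scale:
  "Re (cinner (complex_of_real c *s z) (M *v (complex_of_real c *s z))) =
   c\<^sup>2 * Re (cinner z (M *v z))"
  by (simp add: cinner_scale_left cinner_scale_right vec.scale power2_eq_square)

lemma quadratic_form_attains_max:
  fixes M :: "'n::finite op"
  assumes S: "vec.subspace S" "closed S" and ne: "w0 \<in> S" "w0 \<noteq> 0"
  obtains v where "v \<in> S" "norm v = 1"
    "\<And>z. z \<in> S \<Longrightarrow> Re (cinner z (M *v z)) \<le> Re (cinner v (M *v v)) * (norm z)\<^sup>2"
proof -
  define q where "q = (\<lambda>w. Re (cinner w (M *v w)))"
  define K where "K = S \<inter> sphere 0 1"
  have of_real_scale: "complex_of_real r *s z = r *\<^sub>R z" for r and z :: "complex^'n"
    by (simp add: vector_scalar_mult_def scaleR_vec_def scaleR_conv_of_real)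
  have normalize: "complex_of_real (1 / norm z) *s z \<in> K" if "z \<in> S" "z \<noteq> 0" for z
  proof -
    note e = of_real_scale[of "1 / norm z" z]
    have "complex_of_real (1 / norm z) *s z \<in> S" using S(1) that(1) by (rule vec.subspace_scale)
    moreover have "norm ((1 / norm z) *\<^sub>R z) = 1" using that(2) by simp
    ultimately show ?thesis unfolding K_def e by simp
  qed
  have "compact K" unfolding K_def using S(2) compact_sphere by (rule closed_Int_compact)
  moreover have "K \<noteq> {}" using normalize[OF ne] by blast
  moreover have "continuous_on K q"
    unfolding q_def by (rule continuous_on_subset[OF continuous_on_quadratic_form subset_UNIV])
  ultimately have "\<exists>v\<in>K. \<forall>y\<in>K. q y \<le> q v" by (rule continuous_attains_sup)
  then obtain v where vK: "v \<in> K" and vmax: "\<And>y. y \<in> K \<Longrightarrow> q y \<le> q v" by blast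
  have le: "q z \<le> q v * (norm z)\<^sup>2" if "z \<in> S" for z
  proof (cases "z = 0")
    case False
    have "(1 / norm z)\<^sup>2 * q z \<le> q v"
      using vmax[OF normalize[OF that False]] unfolding q_def quadratic_form_scale .
    thus ?thesis using False by (simp add: field_simps power2_eq_square)
  qed (simp add: q_def)
  show thesis by (rule that[of v]) (use vK le in \<open>simp_all add: K_def q_def\<close>)
qed

lemma quadratic_form_max_orthogonal:
  fixes M :: "'n::finite op"
  assumes herm: "hermitian M" and S: "vec.subspace S" and v: "v \<in> S" "norm v = 1"
    and max: "\<And>z. z \<in> S \<Longrightarrow> Re (cinner z (M *v z)) \<le> Re (cinner v (M *v v)) * (norm z)\<^sup>2"
    and w: "w \<in> S" "cinner v w = 0"
  shows "cinner w (M *v v) = 0"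
proof -
  have Re0: "Re (cinner w (M *v v)) = 0" if w: "w \<in> S" "cinner v w = 0" for w
  proof (rule linear_le_quadratic_imp_zero)
    fix t :: real
    define a where "a = Re (cinner w (M *v v))"
    define z where "z = v + complex_of_real t *s w"
    have "z \<in> S" unfolding z_def using S v w vec.subspace_add vec.subspace_scale by blast
    have "cinner v (M *v w) = cnj (cinner w (M *v v))"
      by (simp add: cinner_hermitian[OF herm, of v w] cinner_cnj)
    hence "cinner z (M *v z) = cinner v (M *v v) + complex_of_real t * cnj (cinner w (M *v v))
         + complex_of_real t * cinner w (M *v v) + complex_of_real (t\<^sup>2) * cinner w (M *v w)"
      unfolding z_def by (simp add: matrix_vector_right_distrib vec.scale cinner_add_left
          cinner_add_right cinner_scale_left cinner_scale_right power2_eq_square algebra_simps)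
    hence qz: "Re (cinner z (M *v z)) = Re (cinner v (M *v v)) + 2 * t * a + t\<^sup>2 * Re (cinner w (M *v w))"
      unfolding a_def by simp
    have "cinner w v = 0" using w(2) cinner_eq_0_sym by blast
    hence "cinner z z = cinner v v + complex_of_real (t\<^sup>2) * cinner w w"
      unfolding z_def using w(2) by (simp add: cinner_add_left cinner_add_right cinner_scale_left
          cinner_scale_right power2_eq_square algebra_simps)
    hence "(norm z)\<^sup>2 = 1 + t\<^sup>2 * (norm w)\<^sup>2"
      unfolding cinner_self v(2) by (metis of_real_1 of_real_add of_real_mult of_real_eq_iff power_one)
    with max[OF \<open>z \<in> S\<close>] qz
    show "2 * t * a \<le> t\<^sup>2 * (Re (cinner v (M *v v)) * (norm w)\<^sup>2 - Re (cinner w (M *v w)))"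
      by (simp add: algebra_simps)
  qed
  have "\<i> *s w \<in> S" using S w(1) vec.subspace_scale by blast
  moreover have "cinner v (\<i> *s w) = 0" using w(2) by (simp add: cinner_scale_right)
  ultimately have "Im (cinner w (M *v v)) = 0"
    using Re0 by (fastforce simp: cinner_scale_left)
  with Re0[OF w] show ?thesis by (simp add: complex_eq_iff)
qed

lemma hermitian_eigenvector_in_invariant_subspace:
  fixes M :: "'n::finite op"
  assumes herm: "hermitian M" and S: "vec.subspace S" "closed S"
    and inv: "\<And>w. w \<in> S \<Longrightarrow> M *v w \<in> S" and ne: "w0 \<in> S" "w0 \<noteq> 0"
  obtains v l where "v \<in> S" "norm v = 1" "M *v v = complex_of_real l *s v"
proof -
  obtain v where v: "v \<in> S" "norm v = 1" and max:
    "\<And>z. z \<in> S \<Longrightarrow> Re (cinner z (M *v z)) \<le> Re (cinner v (M *v v)) * (norm z)\<^sup>2"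
    using quadratic_form_attains_max[OF S ne] by blast
  define l where "l = cinner v (M *v v)"
  define w where "w = M *v v - l *s v"
  have "w \<in> S" unfolding w_def using S inv[OF v(1)] v(1) vec.subspace_diff vec.subspace_scale by blast
  have "cinner v v = 1" using v(2) by (simp add: cinner_self)
  hence vw: "cinner v w = 0" unfolding w_def l_def by (simp add: cinner_diff_right cinner_scale_right)
  hence "cinner w v = 0" using cinner_eq_0_sym by blast
  moreover have "cinner w (M *v v) = 0"
    by (rule quadratic_form_max_orthogonal[OF herm S(1) v max \<open>w \<in> S\<close> vw])
  moreover have "cinner w w = cinner w (M *v v) - l * cinner w v"
    unfolding cinner_scale_right[symmetric] cinner_diff_right[symmetric] w_def ..
  ultimately have "cinner w w = 0" by simp
  hence Mv: "M *v v = l *s v" unfolding cinner_self_eq_0 w_def by simp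
  have "cnj l = l"
    unfolding l_def cinner_cnj by (rule cinner_hermitian[OF herm, symmetric])
  hence "l = complex_of_real (Re l)" by (simp add: complex_eq_iff)
  with Mv v that show thesis by metis
qed

lemma orthonormal_family_complement_nonzero:
  fixes u :: "nat \<Rightarrow> complex^'n::finite"
  assumes on: "\<forall>i<k. \<forall>j<k. cinner (u i) (u j) = (if i = j then 1 else 0)" and k: "k < CARD('n)"
  obtains w where "\<forall>j<k. cinner (u j) w = 0" "w \<noteq> 0"
proof -
  have "w \<in> vec.span (u ` {..<k})" if "\<And>w. \<forall>j<k. cinner (u j) w = 0 \<Longrightarrow> w = 0" for w
  proof -
    define P where "P = (\<Sum>j<k. cinner (u j) w *s u j)"
    have "cinner (u i) (w - P) = 0" if i: "i < k" for i
    proof -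
      have "cinner (u i) P = (\<Sum>j<k. cinner (u j) w * cinner (u i) (u j))"
        unfolding P_def by (simp add: cinner_sum_right cinner_scale_right)
      also have "\<dots> = (\<Sum>j<k. if j = i then cinner (u j) w else 0)"
        by (rule sum.cong) (use on i in auto)
      finally show ?thesis using i by (simp add: cinner_diff_right)
    qed
    hence "w = P" using that by (metis eq_iff_diff_eq_0)
    moreover have "P \<in> vec.span (u ` {..<k})"
      unfolding P_def by (intro vec.span_sum vec.span_scale vec.span_base) auto
    ultimately show ?thesis by simp
  qed
  moreover have "\<not> UNIV \<subseteq> vec.span (u ` {..<k})"
  proof
    assume "UNIV \<subseteq> vec.span (u ` {..<k})"
    hence "vec.dim (UNIV :: (complex^'n) set) \<le> card (u ` {..<k})"
      by (intro vec.dim_le_card) auto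
    also have "\<dots> \<le> k" using card_image_le[of "{..<k}" u] by simp
    finally show False using k by (simp add: card_cart_basis)
  qed
  ultimately show thesis using that by blast
qed

lemma hermitian_orthonormal_eigenvectors:
  fixes M :: "'n::finite op"
  assumes herm: "hermitian M" and "k \<le> CARD('n)"
  shows "\<exists>u e. (\<forall>i<k. \<forall>j<k. cinner (u i) (u j) = (if i = j then 1 else 0)) \<and>
            (\<forall>i<k. M *v u i = complex_of_real (e i) *s u i)"
  using assms(2)
proof (induction k)
  case (Suc k)
  then obtain u e where on: "\<forall>i<k. \<forall>j<k. cinner (u i) (u j) = (if i = j then 1 else 0)"
    and ev: "\<forall>i<k. M *v u i = complex_of_real (e i) *s u i" by auto
  define S where "S = {w. \<forall>j\<in>{..<k}. cinner (u j) w = 0}"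
  have "M *v w \<in> S" if "w \<in> S" for w
    using that ev unfolding S_def by (simp add: cinner_hermitian[OF herm] cinner_scale_left)
  moreover have "k < CARD('n)" using Suc.prems by simp
  then obtain w0 where w0: "\<forall>j<k. cinner (u j) w0 = 0" "w0 \<noteq> 0"
    by (rule orthonormal_family_complement_nonzero[OF on])
  moreover have "w0 \<in> S" using w0(1) by (simp add: S_def)
  ultimately obtain v l where vS: "v \<in> S" and "norm v = 1" and Mv: "M *v v = complex_of_real l *s v"
    using hermitian_eigenvector_in_invariant_subspace[OF herm, of S] S_def
      orthogonal_complement_subspace orthogonal_complement_closed by blast
  have "cinner v v = 1" using \<open>norm v = 1\<close> by (simp add: cinner_self)
  moreover have "cinner (u j) v = 0" "cinner v (u j) = 0" if "j < k" for j
    using vS that cinner_eq_0_sym unfolding S_def by auto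
  ultimately have "\<forall>i<Suc k. \<forall>j<Suc k. cinner ((u(k := v)) i) ((u(k := v)) j) = (if i = j then 1 else 0)"
    using on by (auto simp: less_Suc_eq)
  moreover have "\<forall>i<Suc k. M *v (u(k := v)) i = complex_of_real ((e(k := l)) i) *s (u(k := v)) i"
    using ev Mv by (auto simp: less_Suc_eq)
  ultimately show ?case by blast
qed simp

lemma hermitian_spectral_decomposition:
  fixes M :: "'n::finite op"
  assumes herm: "hermitian M"
  obtains U d where "unitary U" "M = U ** rdiag d ** adj U"
proof -
  obtain u e where on: "\<forall>i<CARD('n). \<forall>j<CARD('n). cinner (u i) (u j) = (if i = j then 1 else 0)"
    and ev: "\<forall>i<CARD('n). M *v u i = complex_of_real (e i) *s u i"
    using hermitian_orthonormal_eigenvectors[OF herm, of "CARD('n)"] by auto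
  obtain h where h: "bij_betw h {0..<CARD('n)} (UNIV::'n set)"
    using ex_bij_betw_nat_finite[of "UNIV :: 'n set"] by auto
  define \<sigma> where "\<sigma> = inv_into {0..<CARD('n)} h"
  have "bij_betw \<sigma> UNIV {0..<CARD('n)}" unfolding \<sigma>_def by (rule bij_betw_inv_into[OF h])
  hence sl: "\<sigma> i < CARD('n)" and si: "\<sigma> i = \<sigma> j \<longleftrightarrow> i = j" for i j
    by (auto simp: bij_betw_def inj_on_def)
  define U :: "'n op" where "U = (\<chi> r i. u (\<sigma> i) $ r)"
  define d where "d i = e (\<sigma> i)" for i
  have "(adj U ** U) $ i $ j = cinner (u (\<sigma> i)) (u (\<sigma> j))" for i j
    by (simp add: adj_def U_def matrix_matrix_mult_def cinner_def)
  hence "adj U ** U = mat 1" using on sl si by (simp add: vec_eq_iff mat_def)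
  hence un: "unitary U" unfolding unitary_def using matrix_left_right_inverse by blast
  have "(M ** U) $ r $ i = (M *v u (\<sigma> i)) $ r" for r i
    by (simp add: U_def matrix_matrix_mult_def matrix_vector_mult_def)
  also have "\<dots> r i = (U ** rdiag d) $ r $ i" for r i
    using ev sl by (simp add: U_def d_def matrix_matrix_mult_def rdiag_def if_distrib cong: if_cong)
  finally have MU: "M ** U = U ** rdiag d" by (simp add: vec_eq_iff)
  have "M = M ** (U ** adj U)" using un unfolding unitary_def by simp
  also have "\<dots> = U ** rdiag d ** adj U" by (simp only: matrix_mul_assoc MU)
  finally show thesis using that un by blast
qed

section \<open>Functional calculus\<close>

lemma matrix_diff_rdistrib: "(A - B) ** C = A ** C - B ** (C :: 'n::finite op)"
  by (simp add: vec_eq_iff matrix_matrix_mult_def sum_subtractf left_diff_distrib)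

lemma matrix_diff_ldistrib: "C ** (A - B) = C ** A - C ** (B :: 'n::finite op)"
  by (simp add: vec_eq_iff matrix_matrix_mult_def sum_subtractf right_diff_distrib)

lemma matrix_mul_rdiag_entry: "(A ** rdiag d) $ i $ j = A $ i $ j * complex_of_real (d j)"
  by (simp add: matrix_matrix_mult_def rdiag_def if_distrib cong: if_cong)

lemma rdiag_matrix_mul_entry: "(rdiag d ** A) $ i $ j = complex_of_real (d i) * A $ i $ j"
proof -
  have "(rdiag d ** A) $ i $ j = (\<Sum>k\<in>UNIV. if i = k then complex_of_real (d i) * A $ k $ j else 0)"
    unfolding matrix_matrix_mult_def rdiag_def vec_lambda_beta by (rule sum.cong) auto
  thus ?thesis by simp
qed

lemma rdiag_mult: "rdiag a ** rdiag b = rdiag (\<lambda>i. a i * b i)"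
  by (simp add: vec_eq_iff matrix_mul_rdiag_entry) (simp add: rdiag_def)

lemma rdiag_eq_0_iff: "rdiag d = 0 \<longleftrightarrow> (\<forall>i. d i = 0)"
  by (auto simp: rdiag_def vec_eq_iff)

lemma adj_adj [simp]: "adj (adj A) = A"
  by (simp add: adj_def vec_eq_iff)

lemma adj_matrix_mul: "adj (A ** B) = adj B ** adj A"
  by (simp add: adj_def vec_eq_iff matrix_matrix_mult_def mult.commute)

lemma adj_rdiag [simp]: "adj (rdiag d) = rdiag d"
  by (simp add: adj_def vec_eq_iff rdiag_def)

lemma adj_mat_1 [simp]: "adj (mat 1 :: 'n::finite op) = mat 1"
  by (simp add: adj_def vec_eq_iff mat_def)

lemma adj_zero [simp]: "adj 0 = 0"
  by (simp add: adj_def vec_eq_iff)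

lemma adj_diff: "adj (A - B) = adj A - adj B"
  by (simp add: adj_def vec_eq_iff)

lemma adj_scaleR: "adj (r *\<^sub>R A) = r *\<^sub>R adj A"
  by (simp add: adj_def vec_eq_iff scaleR_conv_of_real[where 'a=complex])

lemma unitary_adj_mult: "unitary U \<Longrightarrow> adj U ** U = mat 1" "unitary U \<Longrightarrow> U ** adj U = mat 1"
  unfolding unitary_def by auto

lemma hermitian_spectral: "hermitian (U ** rdiag d ** adj U)"
  unfolding hermitian_def by (simp add: adj_matrix_mul matrix_mul_assoc)

lemma hermitian_sandwich: "hermitian X \<Longrightarrow> hermitian N \<Longrightarrow> hermitian (X ** N ** X)"
  unfolding hermitian_def by (simp add: adj_matrix_mul matrix_mul_assoc)

lemma hermitian_scaleR: "hermitian A \<Longrightarrow> hermitian (r *\<^sub>R A)"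
  unfolding hermitian_def by (simp add: adj_scaleR)

lemma hermitian_mult_adj: "hermitian A \<Longrightarrow> hermitian B \<Longrightarrow> adj (A ** B) = B ** A"
  unfolding hermitian_def by (simp add: adj_matrix_mul)

text \<open>A matrix intertwining two diagonal matrices only links equal eigenvalues, hence
  intertwines any function of them; this makes mfun independent of the chosen
  decomposition.\<close>
lemma rdiag_intertwine_fun:
  assumes "W ** rdiag d = rdiag e ** W"
  shows "W ** rdiag (\<lambda>i. g (d i)) = rdiag (\<lambda>i. g (e i)) ** W"
proof -
  have "W $ i $ j * complex_of_real (g (d j)) = complex_of_real (g (e i)) * W $ i $ j" for i j
  proof (cases "W $ i $ j = 0")
    case False
    have "W $ i $ j * complex_of_real (d j) = complex_of_real (e i) * W $ i $ j"
      using assms by (metis matrix_mul_rdiag_entry rdiag_matrix_mul_entry)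
    hence "d j = e i" using False by (simp add: mult.commute)
    thus ?thesis by (simp add: mult.commute)
  qed simp
  thus ?thesis by (simp add: vec_eq_iff matrix_mul_rdiag_entry rdiag_matrix_mul_entry)
qed

lemma spectral_fun_unique:
  assumes U: "unitary U" and V: "unitary V"
    and eq: "U ** rdiag d ** adj U = V ** rdiag e ** adj V"
  shows "U ** rdiag (\<lambda>i. g (d i)) ** adj U = V ** rdiag (\<lambda>i. g (e i)) ** adj V"
proof -
  note UU = unitary_adj_mult[OF U] and VV = unitary_adj_mult[OF V]
  define W where "W = adj V ** U"
  have "W ** rdiag d = adj V ** (U ** rdiag d ** adj U) ** U"
    unfolding W_def by (simp add: matrix_mul_assoc[symmetric] UU)
  also have "\<dots> = rdiag e ** W"
    unfolding eq W_def by (simp add: matrix_mul_assoc VV)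
  finally have intw: "W ** rdiag (\<lambda>i. g (d i)) = rdiag (\<lambda>i. g (e i)) ** W"
    by (rule rdiag_intertwine_fun)
  have VW: "V ** W = U" and WU: "W ** adj U = adj V"
    unfolding W_def by (simp_all add: matrix_mul_assoc VV) (simp add: matrix_mul_assoc[symmetric] UU)
  have "U ** rdiag (\<lambda>i. g (d i)) ** adj U = V ** (W ** rdiag (\<lambda>i. g (d i))) ** adj U"
    by (simp only: matrix_mul_assoc VW)
  also have "\<dots> = V ** rdiag (\<lambda>i. g (e i)) ** (W ** adj U)"
    by (simp only: intw matrix_mul_assoc)
  finally show ?thesis by (simp only: WU)
qed

lemma mfun_spectral:
  assumes U: "unitary U" and M: "M = U ** rdiag d ** adj U"
  shows "mfun f M = U ** rdiag (\<lambda>i. if d i = 0 then 0 else f (d i)) ** adj U"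
proof -
  let ?P = "\<lambda>N. \<exists>U d. unitary U \<and> M = U ** rdiag d ** adj U \<and>
       N = U ** rdiag (\<lambda>i. if d i = 0 then 0 else f (d i)) ** adj U"
  have "?P (U ** rdiag (\<lambda>i. if d i = 0 then 0 else f (d i)) ** adj U)" using U M by blast
  hence "?P (mfun f M)" unfolding mfun_def by (rule someI)
  then obtain V e where V: "unitary V" and M': "M = V ** rdiag e ** adj V"
    and N: "mfun f M = V ** rdiag (\<lambda>i. if e i = 0 then 0 else f (e i)) ** adj V" by blast
  show ?thesis unfolding N
    by (rule spectral_fun_unique[OF V U, of e d "\<lambda>x. if x = 0 then 0 else f x"]) (use M M' in simp)
qed

lemma mfun_cong: "(\<And>x. x \<noteq> 0 \<Longrightarrow> f x = g x) \<Longrightarrow> mfun f M = mfun g M"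
proof -
  assume "\<And>x. x \<noteq> 0 \<Longrightarrow> f x = g x"
  hence "(if x = 0 then 0 else f x) = (if x = 0 then 0 else g x)" for x by simp
  thus ?thesis unfolding mfun_def by (simp only:)
qed

lemma spectral_mult:
  assumes "unitary U"
  shows "(U ** rdiag a ** adj U) ** (U ** rdiag b ** adj U) = U ** rdiag (\<lambda>i. a i * b i) ** adj U"
proof -
  have "(U ** rdiag a ** adj U) ** (U ** rdiag b ** adj U) = U ** rdiag a ** (adj U ** U) ** rdiag b ** adj U"
    by (simp only: matrix_mul_assoc)
  also have "\<dots> = U ** (rdiag a ** rdiag b) ** adj U"
    using unitary_adj_mult[OF assms] by (simp add: matrix_mul_assoc)
  finally show ?thesis by (simp only: rdiag_mult)
qed

lemma mfun_mult:
  assumes "hermitian M"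
  shows "mfun f M ** mfun g M = mfun (\<lambda>x. f x * g x) M"
proof -
  obtain U d where U: "unitary U" and M: "M = U ** rdiag d ** adj U"
    using hermitian_spectral_decomposition[OF assms] .
  note spectral_mult[OF U]
  moreover have "(\<lambda>i. (if d i = 0 then 0 else f (d i)) * (if d i = 0 then 0 else g (d i))) =
      (\<lambda>i. if d i = 0 then 0 else f (d i) * g (d i))" by auto
  ultimately show ?thesis unfolding mfun_spectral[OF U M] by simp
qed

lemma mfun_ident:
  assumes "hermitian M"
  shows "mfun (\<lambda>x. x) M = M"
proof -
  obtain U d where U: "unitary U" and M: "M = U ** rdiag d ** adj U"
    using hermitian_spectral_decomposition[OF assms] .
  have "(\<lambda>i. if d i = 0 then 0 else d i) = d" by auto
  thus ?thesis unfolding mfun_spectral[OF U M] using M by simp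
qed

lemma hermitian_mfun:
  assumes "hermitian M"
  shows "hermitian (mfun f M)"
proof -
  obtain U d where U: "unitary U" and M: "M = U ** rdiag d ** adj U"
    using hermitian_spectral_decomposition[OF assms] .
  show ?thesis unfolding mfun_spectral[OF U M] by (rule hermitian_spectral)
qed

lemma mfun_absorb:
  assumes "hermitian M" and "Q ** M = M"
  shows "Q ** mfun f M = mfun f M"
proof -
  have "mfun f M = mfun (\<lambda>x. x * (f x / x)) M" by (rule mfun_cong) simp
  also have "\<dots> = M ** mfun (\<lambda>x. f x / x) M" by (simp only: mfun_mult[OF assms(1), symmetric] mfun_ident[OF assms(1)])
  finally show ?thesis by (simp only: matrix_mul_assoc assms(2))
qed

lemma rdiag_mult_vec_entry: "(rdiag D *v y) $ i = complex_of_real (D i) * y $ i"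
proof -
  have "(rdiag D *v y) $ i = (\<Sum>j\<in>UNIV. if i = j then complex_of_real (D i) * y $ j else 0)"
    unfolding matrix_vector_mult_def rdiag_def vec_lambda_beta by (rule sum.cong) auto
  thus ?thesis by simp
qed

lemma cinner_rdiag: "cinner y (rdiag D *v y) = complex_of_real (\<Sum>i\<in>UNIV. D i * (cmod (y$i))\<^sup>2)"
proof -
  have "cnj (y $ i) * (complex_of_real (D i) * y $ i) = complex_of_real (D i * (cmod (y $ i))\<^sup>2)" for i
    by (simp only: of_real_mult complex_norm_square mult_ac)
  thus ?thesis unfolding cinner_def rdiag_mult_vec_entry of_real_sum by (rule sum.cong[OF refl])
qed

lemma cinner_spectral:
  "cinner v ((U ** rdiag D ** adj U) *v v) = complex_of_real (\<Sum>i\<in>UNIV. D i * (cmod ((adj U *v v)$i))\<^sup>2)"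
proof -
  have "cinner v ((U ** rdiag D ** adj U) *v v) = cinner v (U *v (rdiag D *v (adj U *v v)))"
    by (simp only: matrix_vector_mul_assoc matrix_mul_assoc)
  also have "\<dots> = cinner (adj U *v v) (rdiag D *v (adj U *v v))" by (rule cinner_adj)
  finally show ?thesis by (simp only: cinner_rdiag)
qed

lemma psd_spectral:
  assumes "\<And>i. D i \<ge> 0"
  shows "psd (U ** rdiag D ** adj U)"
  unfolding psd_iff_cinner cinner_spectral Re_complex_of_real
  by (intro conjI allI hermitian_spectral sum_nonneg mult_nonneg_nonneg assms zero_le_power2)

lemma psd_spectral_nonneg:
  assumes "psd M" "unitary U" "M = U ** rdiag D ** adj U"
  shows "D i \<ge> 0"
proof -
  have "adj U *v (U *v axis i 1) = axis i 1"
    by (simp only: matrix_vector_mul_assoc unitary_adj_mult[OF assms(2)] matrix_vector_mul_lid)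
  hence "Re (cinner (U *v axis i 1) (M *v (U *v axis i 1))) = (\<Sum>k\<in>UNIV. if k = i then D i else 0)"
    unfolding assms(3) cinner_spectral Re_complex_of_real by (intro sum.cong) (auto simp: axis_def)
  moreover have "0 \<le> Re (cinner (U *v axis i 1) (M *v (U *v axis i 1)))"
    using assms(1) unfolding psd_iff_cinner by blast
  ultimately show ?thesis by simp
qed

lemma psd_mfun:
  assumes "hermitian M" "\<And>x. f x \<ge> 0"
  shows "psd (mfun f M)"
proof -
  obtain U d where U: "unitary U" and M: "M = U ** rdiag d ** adj U"
    using hermitian_spectral_decomposition[OF assms(1)] .
  show ?thesis unfolding mfun_spectral[OF U M] by (rule psd_spectral) (simp add: assms(2))
qed

lemma psd_quadratic_form_zero_imp:
  assumes "psd M" and w: "Re (cinner w (M *v w)) = 0"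
  shows "M *v w = 0"
proof -
  obtain U D where U: "unitary U" and M: "M = U ** rdiag D ** adj U"
    using assms(1) hermitian_spectral_decomposition unfolding psd_def by blast
  have D0: "D i \<ge> 0" for i by (rule psd_spectral_nonneg[OF assms(1) U M])
  define y where "y = adj U *v w"
  have "(\<Sum>k\<in>UNIV. D k * (cmod (y $ k))\<^sup>2) = 0"
    using w unfolding M y_def by (simp only: cinner_spectral Re_complex_of_real)
  hence "\<forall>k\<in>UNIV. D k * (cmod (y $ k))\<^sup>2 = 0"
    by (subst (asm) sum_nonneg_eq_0_iff) (auto intro: mult_nonneg_nonneg D0)
  hence "rdiag D *v y = 0" by (simp add: vec_eq_iff rdiag_mult_vec_entry)
  hence "U *v (rdiag D *v y) = 0" by simp
  thus ?thesis unfolding M y_def by (simp only: matrix_vector_mul_assoc matrix_mul_assoc)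
qed

lemma mtrace_sandwich_hermitian:
  assumes "hermitian X"
  shows "mtrace (X ** N ** X) = (\<Sum>j\<in>UNIV. cinner (\<chi> r. X $ r $ j) (N *v (\<chi> r. X $ r $ j)))"
proof -
  have Xc: "cnj (X $ r $ j) = X $ j $ r" for j r
    using assms unfolding hermitian_def adj_def by (metis vec_lambda_beta)
  have "(X ** N ** X) $ j $ j = (\<Sum>r\<in>UNIV. X $ j $ r * (\<Sum>s\<in>UNIV. N $ r $ s * X $ s $ j))" for j
    unfolding matrix_mul_assoc[symmetric] by (simp add: matrix_matrix_mult_def)
  thus ?thesis unfolding mtrace_def cinner_def matrix_vector_mult_def vec_lambda_beta Xc by simp
qed

lemma psd_sandwich_trace_zero:
  assumes N: "psd N" and X: "hermitian X" and tr: "Re (mtrace (X ** N ** X)) = 0"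
  shows "N ** X = 0"
proof -
  define c where "c j = (\<chi> r. X $ r $ j)" for j
  have nn: "0 \<le> Re (cinner (c j) (N *v c j))" for j using N unfolding psd_iff_cinner by blast
  have "(\<Sum>j\<in>UNIV. Re (cinner (c j) (N *v c j))) = 0"
    using tr unfolding mtrace_sandwich_hermitian[OF X] c_def by (simp add: Re_sum)
  hence "Re (cinner (c j) (N *v c j)) = 0" for j using nn by (subst (asm) sum_nonneg_eq_0_iff) auto
  hence z: "N *v c j = 0" for j using psd_quadratic_form_zero_imp[OF N] by blast
  have "(N ** X) $ r $ j = (N *v c j) $ r" for r j
    by (simp add: c_def matrix_matrix_mult_def matrix_vector_mult_def)
  thus ?thesis using z by (simp add: vec_eq_iff)
qed

lemma mtrace_zero [simp]: "mtrace 0 = 0"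
  by (simp add: mtrace_def)

lemma mtrace_scaleR: "mtrace (r *\<^sub>R A) = complex_of_real r * mtrace A"
  by (simp add: mtrace_def scaleR_conv_of_real[where 'a=complex] sum_distrib_left)

lemma mtrace_commute: "mtrace (A ** B) = mtrace (B ** (A :: 'n::finite op))"
  unfolding mtrace_def matrix_matrix_mult_def vec_lambda_beta by (subst sum.swap) (simp add: mult.commute)

lemma mtrace_spectral:
  assumes "unitary U"
  shows "mtrace (U ** rdiag d ** adj U) = complex_of_real (\<Sum>i\<in>UNIV. d i)"
proof -
  have "mtrace (U ** rdiag d ** adj U) = mtrace (adj U ** (U ** rdiag d))"
    by (rule mtrace_commute)
  also have "\<dots> = mtrace (rdiag d)" by (simp only: matrix_mul_assoc unitary_adj_mult[OF assms] matrix_mul_lid)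
  finally show ?thesis by (simp add: mtrace_def rdiag_def)
qed

definition support_proj :: "'n::finite op \<Rightarrow> 'n op" where
  "support_proj M = mfun (\<lambda>_. 1) M"

lemma hermitian_mpow: "hermitian M \<Longrightarrow> hermitian (mpow M p)"
  unfolding mpow_def by (rule hermitian_mfun)

lemma psd_mpow: "hermitian M \<Longrightarrow> psd (mpow M p)"
  unfolding mpow_def by (rule psd_mfun) simp_all

lemma hermitian_support_proj: "hermitian M \<Longrightarrow> hermitian (support_proj M)"
  unfolding support_proj_def by (rule hermitian_mfun)

lemma support_proj_idem: "hermitian M \<Longrightarrow> support_proj M ** support_proj M = support_proj M"
  unfolding support_proj_def by (simp add: mfun_mult)

lemma mult_support_proj:
  assumes "hermitian M"
  shows "M ** support_proj M = M"
proof -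
  have "M ** support_proj M = mfun (\<lambda>x. x) M ** mfun (\<lambda>_. 1) M"
    by (simp only: mfun_ident[OF assms] support_proj_def)
  also have "\<dots> = M" by (subst mfun_mult[OF assms]) (simp only: mult_1_right mfun_ident[OF assms])
  finally show ?thesis .
qed

lemma mpow_uminus_mult:
  assumes "hermitian M"
  shows "mpow M (- p) ** mpow M p = support_proj M" "mpow M p ** mpow M (- p) = support_proj M"
  unfolding mpow_def support_proj_def mfun_mult[OF assms]
  by (rule mfun_cong, simp add: powr_add[symmetric])+

lemma hermitian_absorb_right:
  assumes "hermitian Q" "hermitian X" "Q ** X = X"
  shows "X ** Q = X"
  using hermitian_mult_adj[OF assms(1,2)] assms(2,3) unfolding hermitian_def by simp

lemma mpow_eq_0_imp:
  assumes h: "hermitian M" and z: "mpow M a = 0"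
  shows "M = 0"
proof -
  obtain U d where U: "unitary U" and M: "M = U ** rdiag d ** adj U"
    using hermitian_spectral_decomposition[OF h] .
  define d' where "d' i = (if d i = 0 then 0 else d i powr a)" for i
  have "U ** rdiag d' ** adj U = 0" using z unfolding mpow_def mfun_spectral[OF U M] d'_def .
  hence "adj U ** (U ** rdiag d' ** adj U) ** U = 0" by simp
  hence "rdiag d' = 0"
    by (simp add: matrix_mul_assoc unitary_adj_mult[OF U]) (simp add: matrix_mul_assoc[symmetric] unitary_adj_mult[OF U])
  hence "d i = 0" for i unfolding rdiag_eq_0_iff d'_def by (metis powr_eq_0_iff)
  hence "rdiag d = 0" by (simp add: rdiag_eq_0_iff)
  thus ?thesis unfolding M by simp
qed

lemma mtrace_mpow_pos:
  assumes h: "hermitian M" and nz: "M \<noteq> 0"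
  shows "Re (mtrace (mpow M p)) > 0"
proof -
  obtain U d where U: "unitary U" and M: "M = U ** rdiag d ** adj U"
    using hermitian_spectral_decomposition[OF h] .
  have "rdiag d \<noteq> 0" using nz unfolding M by auto
  then obtain i where i: "d i \<noteq> 0" unfolding rdiag_eq_0_iff by blast
  have "0 < (\<Sum>i\<in>UNIV. if d i = 0 then 0 else d i powr p)"
    by (rule sum_pos2[of UNIV i]) (use i in auto)
  thus ?thesis unfolding mpow_def mfun_spectral[OF U M] mtrace_spectral[OF U] by simp
qed

lemma scaleR_spectral: "r *\<^sub>R (U ** rdiag d ** adj U) = U ** rdiag (\<lambda>i. r * d i) ** adj U"
proof -
  have "rdiag (\<lambda>i. r * d i) = r *\<^sub>R rdiag d"
    by (simp add: rdiag_def vec_eq_iff scaleR_conv_of_real[where 'a=complex])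
  thus ?thesis by (simp add: scalar_matrix_assoc matrix_scalar_ac)
qed

lemma mpow_scaleR:
  assumes h: "hermitian M" and r: "r \<ge> 0"
  shows "mpow (r *\<^sub>R M) p = (r powr p) *\<^sub>R mpow M p"
proof -
  obtain U d where U: "unitary U" and M: "M = U ** rdiag d ** adj U"
    using hermitian_spectral_decomposition[OF h] .
  have rM: "r *\<^sub>R M = U ** rdiag (\<lambda>i. r * d i) ** adj U" unfolding M by (rule scaleR_spectral)
  have "(\<lambda>i. if r * d i = 0 then 0 else (r * d i) powr p) =
      (\<lambda>i. r powr p * (if d i = 0 then 0 else d i powr p))"
    using r by (auto simp: powr_mult fun_eq_iff)
  thus ?thesis unfolding mpow_def mfun_spectral[OF U rM] mfun_spectral[OF U M] scaleR_spectral by simp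
qed

section \<open>Partial traces and embeddings\<close>

lemma sum_UNIV_prod: "(\<Sum>p\<in>UNIV. f p) = (\<Sum>a\<in>UNIV. \<Sum>b\<in>UNIV. f (a, b))"
  by (simp add: sum.cartesian_product UNIV_Times_UNIV[symmetric] del: UNIV_Times_UNIV)

lemma sum_UNIV_prod3: "(\<Sum>p\<in>UNIV. f p) = (\<Sum>b\<in>UNIV. \<Sum>a\<in>UNIV. \<Sum>e\<in>UNIV. f (a, b, e))"
  unfolding sum_UNIV_prod[of f] sum_UNIV_prod[of "\<lambda>q. f (_, q)"] by (rule sum.swap)

lemma sum_swap3:
  "(\<Sum>a\<in>A. \<Sum>e\<in>E. \<Sum>b\<in>B. G a e b) = (\<Sum>b\<in>B. \<Sum>a\<in>A. \<Sum>e\<in>E. (G a e b :: 'z::comm_monoid_add))"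
proof -
  have "(\<Sum>a\<in>A. \<Sum>e\<in>E. \<Sum>b\<in>B. G a e b) = (\<Sum>a\<in>A. \<Sum>b\<in>B. \<Sum>e\<in>E. G a e b)"
    by (rule sum.cong[OF refl]) (rule sum.swap)
  also have "\<dots> = (\<Sum>b\<in>B. \<Sum>a\<in>A. \<Sum>e\<in>E. G a e b)" by (rule sum.swap)
  finally show ?thesis .
qed

lemma op_eq2I:
  "(\<And>a e a' e'. A $ (a,e) $ (a',e') = B $ (a,e) $ (a',e')) \<Longrightarrow> A = B"
  by (simp add: vec_eq_iff split_paired_all)

lemma op_eq3I:
  "(\<And>a b e a' b' e'. A $ (a,b,e) $ (a',b',e') = B $ (a,b,e) $ (a',b',e')) \<Longrightarrow> A = B"
  by (simp add: vec_eq_iff split_paired_all)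

lemma ptrB_entry: "ptrB M $ (a,e) $ (a',e') = (\<Sum>b\<in>UNIV. M $ (a,b,e) $ (a',b,e'))"
  by (simp add: ptrB_def)

lemma ptrA_entry: "ptrA M $ e $ e' = (\<Sum>a\<in>UNIV. M $ (a,e) $ (a,e'))"
  by (simp add: ptrA_def)

lemma ptrA_ABE_entry: "ptrA_ABE M $ (b,e) $ (b',e') = (\<Sum>a\<in>UNIV. M $ (a,b,e) $ (a,b',e'))"
  by (simp add: ptrA_ABE_def)

lemma extB_entry: "extB P $ (a,b,e) $ (a',b',e') = (if b = b' then P $ (a,e) $ (a',e') else 0)"
  by (simp add: extB_def)

lemma extB'_entry: "extB' P $ (b,e) $ (b',e') = (if b = b' then P $ e $ e' else 0)"
  by (simp add: extB'_def)

lemma matrix_mul_entry2: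
  "(P ** Q) $ i $ j = (\<Sum>x\<in>UNIV. \<Sum>z\<in>UNIV. P $ i $ (x,z) * Q $ (x,z) $ j)"
  unfolding matrix_matrix_mult_def vec_lambda_beta by (rule sum_UNIV_prod)

lemma extB_mult_entry:
  "(extB A ** M) $ (a,b,e) $ j = (\<Sum>x\<in>UNIV. \<Sum>z\<in>UNIV. A $ (a,e) $ (x,z) * M $ (x,b,z) $ j)"
proof -
  have "(extB A ** M) $ (a,b,e) $ j = (\<Sum>y\<in>UNIV. \<Sum>x\<in>UNIV. \<Sum>z\<in>UNIV.
      extB A $ (a,b,e) $ (x,y,z) * M $ (x,y,z) $ j)"
    unfolding matrix_matrix_mult_def vec_lambda_beta by (rule sum_UNIV_prod3)
  also have "\<dots> = (\<Sum>y\<in>UNIV. if y = b then \<Sum>x\<in>UNIV. \<Sum>z\<in>UNIV. A $ (a,e) $ (x,z) * M $ (x,b,z) $ j else 0)"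
    by (rule sum.cong) (auto simp: extB_entry)
  finally show ?thesis by simp
qed

lemma mult_extB_entry:
  "(M ** extB A) $ i $ (a',b',e') = (\<Sum>x\<in>UNIV. \<Sum>z\<in>UNIV. M $ i $ (x,b',z) * A $ (x,z) $ (a',e'))"
proof -
  have "(M ** extB A) $ i $ (a',b',e') = (\<Sum>y\<in>UNIV. \<Sum>x\<in>UNIV. \<Sum>z\<in>UNIV.
      M $ i $ (x,y,z) * extB A $ (x,y,z) $ (a',b',e'))"
    unfolding matrix_matrix_mult_def vec_lambda_beta by (rule sum_UNIV_prod3)
  also have "\<dots> = (\<Sum>y\<in>UNIV. if y = b' then \<Sum>x\<in>UNIV. \<Sum>z\<in>UNIV. M $ i $ (x,b',z) * A $ (x,z) $ (a',e') else 0)"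
    by (rule sum.cong) (auto simp: extB_entry)
  finally show ?thesis by simp
qed

lemma extB'_mult_entry: "(extB' A ** M) $ (b,e) $ j = (\<Sum>z\<in>UNIV. A $ e $ z * M $ (b,z) $ j)"
proof -
  have "(extB' A ** M) $ (b,e) $ j = (\<Sum>x\<in>UNIV. if x = b then \<Sum>z\<in>UNIV. A $ e $ z * M $ (b,z) $ j else 0)"
    unfolding matrix_mul_entry2 by (rule sum.cong) (auto simp: extB'_entry)
  thus ?thesis by simp
qed

lemma mult_extB'_entry: "(M ** extB' A) $ i $ (b',e') = (\<Sum>z\<in>UNIV. M $ i $ (b',z) * A $ z $ e')"
proof -
  have "(M ** extB' A) $ i $ (b',e') = (\<Sum>x\<in>UNIV. if x = b' then \<Sum>z\<in>UNIV. M $ i $ (b',z) * A $ z $ e' else 0)"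
    unfolding matrix_mul_entry2 by (rule sum.cong) (auto simp: extB'_entry)
  thus ?thesis by simp
qed

lemma extB_one: "extB (mat 1) = (mat 1 :: ('a::finite \<times> 'b::finite \<times> 'e::finite) op)"
  by (rule op_eq3I) (auto simp: extB_entry mat_def)

lemma extB_diff: "extB (A - B) = extB A - (extB B :: ('a::finite \<times> 'b::finite \<times> 'e::finite) op)"
  by (rule op_eq3I) (auto simp: extB_entry)

lemma extB_adj: "adj (extB A) = (extB (adj A) :: ('a::finite \<times> 'b::finite \<times> 'e::finite) op)"
  by (rule op_eq3I) (auto simp: extB_entry adj_def)

lemma extB_scaleR: "extB (r *\<^sub>R A) = r *\<^sub>R (extB A :: ('a::finite \<times> 'b::finite \<times> 'e::finite) op)"
  by (rule op_eq3I) (auto simp: extB_entry)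

lemma extB_mult: "extB P ** extB Q = (extB (P ** Q) :: ('a::finite \<times> 'b::finite \<times> 'e::finite) op)"
proof (rule op_eq3I)
  fix a b e a' b' e'
  have "(extB P ** extB Q) $ (a,b,e) $ (a',b',e') = (\<Sum>x\<in>UNIV. \<Sum>z\<in>UNIV.
      P $ (a,e) $ (x,z) * (if b = b' then Q $ (x,z) $ (a',e') else 0))"
    unfolding extB_mult_entry extB_entry ..
  also have "\<dots> = extB (P ** Q) $ (a,b,e) $ (a',b',e')"
    unfolding extB_entry matrix_mul_entry2 by simp
  finally show "(extB P ** extB Q) $ (a,b,e) $ (a',b',e') = extB (P ** Q) $ (a,b,e) $ (a',b',e')" .
qed

lemma extB'_one: "extB' (mat 1) = (mat 1 :: ('b::finite \<times> 'e::finite) op)"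
  by (rule op_eq2I) (auto simp: extB'_entry mat_def)

lemma extB'_diff: "extB' (A - B) = extB' A - (extB' B :: ('b::finite \<times> 'e::finite) op)"
  by (rule op_eq2I) (auto simp: extB'_entry)

lemma extB'_adj: "adj (extB' A) = (extB' (adj A) :: ('b::finite \<times> 'e::finite) op)"
  by (rule op_eq2I) (auto simp: extB'_entry adj_def)

lemma extB'_scaleR: "extB' (r *\<^sub>R A) = r *\<^sub>R (extB' A :: ('b::finite \<times> 'e::finite) op)"
  by (rule op_eq2I) (auto simp: extB'_entry)

lemma extB'_mult: "extB' A ** extB' B = (extB' (A ** B) :: ('b::finite \<times> 'e::finite) op)"
  by (rule op_eq2I) (unfold extB'_mult_entry, auto simp: extB'_entry matrix_matrix_mult_def)

lemma ptrB_adj: "adj (ptrB M) = ptrB (adj (M :: ('a::finite \<times> 'b::finite \<times> 'e::finite) op))"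
  by (rule op_eq2I) (simp add: ptrB_entry adj_def)

lemma ptrB_scaleR: "ptrB (r *\<^sub>R M) = r *\<^sub>R ptrB (M :: ('a::finite \<times> 'b::finite \<times> 'e::finite) op)"
  by (rule op_eq2I) (simp add: ptrB_entry scaleR_sum_right)

lemma ptrA_adj: "adj (ptrA M) = ptrA (adj (M :: ('a::finite \<times> 'e::finite) op))"
  by (simp add: vec_eq_iff ptrA_entry adj_def)

lemma ptrA_scaleR: "ptrA (r *\<^sub>R M) = r *\<^sub>R ptrA (M :: ('a::finite \<times> 'e::finite) op)"
  by (simp add: vec_eq_iff ptrA_entry scaleR_sum_right)

lemma ptrA_ABE_adj: "adj (ptrA_ABE M) = ptrA_ABE (adj (M :: ('a::finite \<times> 'b::finite \<times> 'e::finite) op))"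
  by (rule op_eq2I) (simp add: ptrA_ABE_entry adj_def)

lemma ptrA_ABE_scaleR: "ptrA_ABE (r *\<^sub>R M) = r *\<^sub>R ptrA_ABE (M :: ('a::finite \<times> 'b::finite \<times> 'e::finite) op)"
  by (rule op_eq2I) (simp add: ptrA_ABE_entry scaleR_sum_right)

lemma hermitian_ptrB: "hermitian M \<Longrightarrow> hermitian (ptrB M)"
  unfolding hermitian_def by (simp add: ptrB_adj)

lemma hermitian_ptrA: "hermitian M \<Longrightarrow> hermitian (ptrA M)"
  unfolding hermitian_def by (simp add: ptrA_adj)

lemma hermitian_ptrA_ABE: "hermitian M \<Longrightarrow> hermitian (ptrA_ABE M)"
  unfolding hermitian_def by (simp add: ptrA_ABE_adj)

lemma hermitian_extB: "hermitian M \<Longrightarrow> hermitian (extB M)"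
  unfolding hermitian_def by (simp add: extB_adj)

lemma hermitian_extB': "hermitian M \<Longrightarrow> hermitian (extB' M)"
  unfolding hermitian_def by (simp add: extB'_adj)

lemma mtrace_ptrA_ABE: "mtrace (ptrA_ABE M) = mtrace (M :: ('a::finite \<times> 'b::finite \<times> 'e::finite) op)"
proof -
  have "mtrace (ptrA_ABE M) = (\<Sum>b\<in>UNIV. \<Sum>e\<in>UNIV. \<Sum>a\<in>UNIV. M $ (a,b,e) $ (a,b,e))"
    unfolding mtrace_def sum_UNIV_prod[where f="\<lambda>k. ptrA_ABE M $ k $ k"] ptrA_ABE_entry ..
  also have "\<dots> = (\<Sum>a\<in>UNIV. \<Sum>b\<in>UNIV. \<Sum>e\<in>UNIV. M $ (a,b,e) $ (a,b,e))" by (rule sum_swap3)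
  also have "\<dots> = mtrace M" unfolding mtrace_def by (simp add: sum_UNIV_prod)
  finally show ?thesis .
qed

lemma mtrace_extB_mult: "mtrace (extB A ** M) = mtrace (A ** ptrB (M :: ('a::finite \<times> 'b::finite \<times> 'e::finite) op))"
proof -
  have "mtrace (extB A ** M) = (\<Sum>b\<in>UNIV. \<Sum>a\<in>UNIV. \<Sum>e\<in>UNIV. \<Sum>x\<in>UNIV. \<Sum>z\<in>UNIV.
          A $ (a,e) $ (x,z) * M $ (x,b,z) $ (a,b,e))"
    unfolding mtrace_def sum_UNIV_prod3[where f="\<lambda>k. (extB A ** M) $ k $ k"] extB_mult_entry ..
  also have "\<dots> = (\<Sum>a\<in>UNIV. \<Sum>e\<in>UNIV. \<Sum>b\<in>UNIV. \<Sum>x\<in>UNIV. \<Sum>z\<in>UNIV.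
          A $ (a,e) $ (x,z) * M $ (x,b,z) $ (a,b,e))" by (rule sum_swap3[symmetric])
  also have "\<dots> = (\<Sum>a\<in>UNIV. \<Sum>e\<in>UNIV. \<Sum>x\<in>UNIV. \<Sum>z\<in>UNIV. \<Sum>b\<in>UNIV.
          A $ (a,e) $ (x,z) * M $ (x,b,z) $ (a,b,e))"
    by (intro sum.cong refl) (rule sum_swap3[symmetric])
  also have "\<dots> = mtrace (A ** ptrB M)"
    unfolding mtrace_def sum_UNIV_prod[where f="\<lambda>k. (A ** ptrB M) $ k $ k"]
    by (simp add: matrix_mul_entry2 ptrB_entry sum_distrib_left)
  finally show ?thesis .
qed

lemma ptrB_extB_mult: "ptrB (extB Q ** M) = Q ** ptrB (M :: ('a::finite \<times> 'b::finite \<times> 'e::finite) op)"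
proof (rule op_eq2I)
  fix a e a' e'
  have "ptrB (extB Q ** M) $ (a,e) $ (a',e') = (\<Sum>b\<in>UNIV. \<Sum>x\<in>UNIV. \<Sum>z\<in>UNIV.
      Q $ (a,e) $ (x,z) * M $ (x,b,z) $ (a',b,e'))"
    unfolding ptrB_entry extB_mult_entry ..
  also have "\<dots> = (\<Sum>x\<in>UNIV. \<Sum>z\<in>UNIV. \<Sum>b\<in>UNIV. Q $ (a,e) $ (x,z) * M $ (x,b,z) $ (a',b,e'))"
    by (rule sum_swap3[symmetric])
  also have "\<dots> = (Q ** ptrB M) $ (a,e) $ (a',e')"
    unfolding matrix_mul_entry2 ptrB_entry by (simp add: sum_distrib_left)
  finally show "ptrB (extB Q ** M) $ (a,e) $ (a',e') = (Q ** ptrB M) $ (a,e) $ (a',e')" .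
qed

lemma mtrace_extB'_mult: "mtrace (extB' A ** M) = mtrace (A ** ptrA (M :: ('a::finite \<times> 'e::finite) op))"
proof -
  have "mtrace (extB' A ** M) = (\<Sum>a\<in>UNIV. \<Sum>e\<in>UNIV. \<Sum>z\<in>UNIV. A $ e $ z * M $ (a,z) $ (a,e))"
    unfolding mtrace_def sum_UNIV_prod[where f="\<lambda>k. (extB' A ** M) $ k $ k"] extB'_mult_entry ..
  also have "\<dots> = (\<Sum>e\<in>UNIV. \<Sum>z\<in>UNIV. \<Sum>a\<in>UNIV. A $ e $ z * M $ (a,z) $ (a,e))"
    by (rule sum_swap3[symmetric])
  also have "\<dots> = mtrace (A ** ptrA M)"
    unfolding mtrace_def matrix_matrix_mult_def ptrA_entry by (simp add: sum_distrib_left)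
  finally show ?thesis .
qed

lemma extB'_mult_ptrA_ABE:
  "extB' P ** ptrA_ABE N = ptrA_ABE (extB (extB' P) ** (N :: ('a::finite \<times> 'b::finite \<times> 'e::finite) op))"
proof (rule op_eq2I)
  fix b e b' e'
  have "(extB' P ** ptrA_ABE N) $ (b,e) $ (b',e') = (\<Sum>z\<in>UNIV. \<Sum>a\<in>UNIV. P $ e $ z * N $ (a,b,z) $ (a,b',e'))"
    unfolding extB'_mult_entry ptrA_ABE_entry by (simp add: sum_distrib_left)
  also have "\<dots> = (\<Sum>a\<in>UNIV. \<Sum>z\<in>UNIV. P $ e $ z * N $ (a,b,z) $ (a,b',e'))" by (rule sum.swap)
  also have "\<dots> = ptrA_ABE (extB (extB' P) ** N) $ (b,e) $ (b',e')"
    unfolding ptrA_ABE_entry extB_mult_entry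
  proof (rule sum.cong[OF refl])
    fix a
    have "(\<Sum>x\<in>UNIV. \<Sum>z\<in>UNIV. extB' P $ (a,e) $ (x,z) * N $ (x,b,z) $ (a,b',e'))
        = (\<Sum>x\<in>UNIV. if x = a then (\<Sum>z\<in>UNIV. P $ e $ z * N $ (a,b,z) $ (a,b',e')) else 0)"
      by (rule sum.cong) (auto simp: extB'_entry)
    thus "(\<Sum>z\<in>UNIV. P $ e $ z * N $ (a,b,z) $ (a,b',e')) =
        (\<Sum>x\<in>UNIV. \<Sum>z\<in>UNIV. extB' P $ (a,e) $ (x,z) * N $ (x,b,z) $ (a,b',e'))" by simp
  qed
  finally show "(extB' P ** ptrA_ABE N) $ (b,e) $ (b',e') = ptrA_ABE (extB (extB' P) ** N) $ (b,e) $ (b',e')" .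
qed

lemma ptrA_ABE_mult_extB':
  "ptrA_ABE N ** extB' P = ptrA_ABE (N ** extB (extB' P) :: ('a::finite \<times> 'b::finite \<times> 'e::finite) op)"
proof (rule op_eq2I)
  fix b e b' e'
  have "(ptrA_ABE N ** extB' P) $ (b,e) $ (b',e') = (\<Sum>z\<in>UNIV. \<Sum>a\<in>UNIV. N $ (a,b,e) $ (a,b',z) * P $ z $ e')"
    unfolding mult_extB'_entry ptrA_ABE_entry by (simp add: sum_distrib_right)
  also have "\<dots> = (\<Sum>a\<in>UNIV. \<Sum>z\<in>UNIV. N $ (a,b,e) $ (a,b',z) * P $ z $ e')" by (rule sum.swap)
  also have "\<dots> = ptrA_ABE (N ** extB (extB' P)) $ (b,e) $ (b',e')"
    unfolding ptrA_ABE_entry mult_extB_entry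
  proof (rule sum.cong[OF refl])
    fix a
    have "(\<Sum>x\<in>UNIV. \<Sum>z\<in>UNIV. N $ (a,b,e) $ (x,b',z) * extB' P $ (x,z) $ (a,e'))
        = (\<Sum>x\<in>UNIV. if x = a then (\<Sum>z\<in>UNIV. N $ (a,b,e) $ (a,b',z) * P $ z $ e') else 0)"
      by (rule sum.cong) (auto simp: extB'_entry)
    thus "(\<Sum>z\<in>UNIV. N $ (a,b,e) $ (a,b',z) * P $ z $ e') =
        (\<Sum>x\<in>UNIV. \<Sum>z\<in>UNIV. N $ (a,b,e) $ (x,b',z) * extB' P $ (x,z) $ (a,e'))" by simp
  qed
  finally show "(ptrA_ABE N ** extB' P) $ (b,e) $ (b',e') = ptrA_ABE (N ** extB (extB' P)) $ (b,e) $ (b',e')" .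
qed

section \<open>Supports of marginals\<close>

text \<open>E is the dual of a trace-preserving map sending \<rho> to R (in the applications a partial
  trace).  The complement Z of the support of R pulls back to a projection E Z with
  tr(E Z \<rho> E Z) = tr(Z R) = 0, which for PSD \<rho> forces E Z \<rho> = 0.\<close>
lemma support_proj_pullback_absorb:
  fixes E :: "'k::finite op \<Rightarrow> 'n::finite op"
  assumes psd: "psd \<rho>" and hR: "hermitian R"
    and E1: "E (mat 1) = mat 1" and Ediff: "\<And>A B. E (A - B) = E A - E B"
    and Eadj: "\<And>A. adj (E A) = E (adj A)" and Emult: "\<And>A B. E A ** E B = E (A ** B)"
    and tr: "\<And>A. mtrace (E A ** \<rho>) = mtrace (A ** R)"
  shows "E (support_proj R) ** \<rho> = \<rho>"
proof -
  define P where "P = mat 1 - support_proj R"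
  have hP: "adj P = P"
    unfolding P_def adj_diff using hermitian_support_proj[OF hR] unfolding hermitian_def by simp
  have RP: "R ** P = 0" unfolding P_def matrix_diff_ldistrib mult_support_proj[OF hR] by simp
  have PP: "P ** P = P"
    unfolding P_def matrix_diff_rdistrib matrix_diff_ldistrib support_proj_idem[OF hR] by simp
  define Z where "Z = E P"
  have hZ: "hermitian Z" unfolding hermitian_def Z_def Eadj hP ..
  have "mtrace (Z ** \<rho> ** Z) = mtrace (Z ** (Z ** \<rho>))" by (rule mtrace_commute)
  also have "\<dots> = mtrace (P ** R)" unfolding Z_def matrix_mul_assoc Emult PP by (rule tr)
  also have "\<dots> = 0" by (subst mtrace_commute) (simp add: RP)
  finally have "\<rho> ** Z = 0" using psd_sandwich_trace_zero[OF psd hZ] by simp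
  moreover have "Z ** \<rho> = adj (\<rho> ** Z)"
    using hermitian_mult_adj[OF _ hZ, of \<rho>] psd unfolding psd_def by simp
  ultimately have Zr: "Z ** \<rho> = 0" by simp
  have "E (support_proj R) = mat 1 - Z" unfolding Z_def P_def Ediff E1 by simp
  thus ?thesis by (simp add: matrix_diff_rdistrib Zr)
qed

lemma extB_support_proj_ptrB:
  "psd \<rho> \<Longrightarrow> extB (support_proj (ptrB \<rho>)) ** \<rho> = \<rho>"
  by (rule support_proj_pullback_absorb)
    (simp_all add: psd_def hermitian_ptrB extB_one extB_diff extB_adj extB_mult mtrace_extB_mult)

lemma extB_extB'_support_proj_ptrA:
  "psd \<rho> \<Longrightarrow> extB (extB' (support_proj (ptrA (ptrB \<rho>)))) ** \<rho> = \<rho>"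
  by (rule support_proj_pullback_absorb[where E = "\<lambda>A. extB (extB' A)"])
    (simp_all add: psd_def hermitian_ptrA hermitian_ptrB extB_one extB_diff extB_adj extB_mult
      extB'_one extB'_diff extB'_adj extB'_mult mtrace_extB_mult mtrace_extB'_mult)

lemma extB'_support_proj_ptrA_mult:
  "psd \<rho> \<Longrightarrow> extB' (support_proj (ptrA (ptrB \<rho>))) ** ptrB \<rho> = ptrB \<rho>"
  using arg_cong[OF extB_extB'_support_proj_ptrA, of _ ptrB] by (simp only: ptrB_extB_mult)

section \<open>Block-diagonal operators\<close>

definition block_diag :: "('i::finite \<Rightarrow> 'm::finite \<times> 'x::finite) \<Rightarrow> ('x \<Rightarrow> 'm op) \<Rightarrow> 'i op" where
  "block_diag g M = (\<chi> i j. if snd (g i) = snd (g j) then M (snd (g i)) $ fst (g i) $ fst (g j) else 0)"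

lemma block_diag_entry:
  "block_diag g M $ i $ j = (if snd (g i) = snd (g j) then M (snd (g i)) $ fst (g i) $ fst (g j) else 0)"
  by (simp add: block_diag_def)

lemma sum_UNIV_bij_reindex:
  assumes "bij g"
  shows "(\<Sum>k\<in>UNIV. F k) = (\<Sum>m\<in>UNIV. \<Sum>x\<in>UNIV. F (inv g (m, x)))"
proof -
  have "bij_betw (inv g) UNIV UNIV" using assms by (simp add: bij_imp_bij_inv)
  hence "(\<Sum>q\<in>UNIV. F (inv g q)) = (\<Sum>k\<in>UNIV. F k)" by (rule sum.reindex_bij_betw)
  thus ?thesis by (simp add: sum_UNIV_prod[where f="\<lambda>q. F (inv g q)"])
qed

lemma block_diag_mult:
  assumes b: "bij g"
  shows "block_diag g M ** block_diag g N = block_diag g (\<lambda>x. M x ** N x)"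
proof -
  have gi: "g (inv g q) = q" for q using b by (simp add: bij_is_surj surj_f_inv_f)
  have "(block_diag g M ** block_diag g N) $ i $ j = (\<Sum>m\<in>UNIV. \<Sum>x\<in>UNIV.
      block_diag g M $ i $ inv g (m,x) * block_diag g N $ inv g (m,x) $ j)" for i j
    unfolding matrix_matrix_mult_def vec_lambda_beta by (rule sum_UNIV_bij_reindex[OF b])
  also have "\<dots> i j = (\<Sum>m\<in>UNIV. \<Sum>x\<in>UNIV. if x = snd (g i) then
      (if snd (g i) = snd (g j) then M (snd (g i)) $ fst (g i) $ m * N (snd (g i)) $ m $ fst (g j) else 0)
      else 0)" for i j
    by (intro sum.cong refl) (auto simp: block_diag_entry gi)
  also have "\<dots> i j = block_diag g (\<lambda>x. M x ** N x) $ i $ j" for i j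
    by (simp add: block_diag_entry matrix_matrix_mult_def)
  finally show ?thesis by (simp add: vec_eq_iff)
qed

lemma block_diag_adj: "adj (block_diag g M) = block_diag g (\<lambda>x. adj (M x))"
  by (simp add: vec_eq_iff block_diag_entry adj_def)

lemma block_diag_rdiag:
  assumes "inj g"
  shows "block_diag g (\<lambda>x. rdiag (D x)) = rdiag (\<lambda>i. D (snd (g i)) (fst (g i)))"
proof -
  have "snd (g i) = snd (g j) \<and> fst (g i) = fst (g j) \<longleftrightarrow> i = j" for i j
    using assms by (metis injD prod.expand)
  thus ?thesis by (auto simp: vec_eq_iff block_diag_entry rdiag_def)
qed

lemma block_diag_one:
  assumes "inj g"
  shows "block_diag g (\<lambda>x. mat 1) = mat 1"
proof -
  have "snd (g i) = snd (g j) \<and> fst (g i) = fst (g j) \<longleftrightarrow> i = j" for i j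
    using assms by (metis injD prod.expand)
  thus ?thesis by (auto simp: vec_eq_iff block_diag_entry mat_def)
qed

lemma unitary_block_diag: "bij g \<Longrightarrow> (\<And>x. unitary (U x)) \<Longrightarrow> unitary (block_diag g U)"
  unfolding unitary_def block_diag_adj by (simp add: block_diag_mult block_diag_one bij_is_inj)

lemma mfun_block_diag:
  assumes b: "bij g" and h: "\<And>x. hermitian (M x)"
  shows "mfun f (block_diag g M) = block_diag g (\<lambda>x. mfun f (M x))"
proof -
  have "\<forall>x. \<exists>U d. unitary U \<and> M x = U ** rdiag d ** adj U"
    using hermitian_spectral_decomposition[OF h] by metis
  then obtain U d where U: "\<And>x. unitary (U x)" and M: "\<And>x. M x = U x ** rdiag (d x) ** adj (U x)"
    by metis
  define D where "D i = d (snd (g i)) (fst (g i))" for i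
  have "block_diag g M = block_diag g U ** rdiag D ** adj (block_diag g U)"
    unfolding D_def block_diag_adj block_diag_mult[OF b] block_diag_rdiag[OF bij_is_inj[OF b], symmetric]
      M[symmetric] ..
  from mfun_spectral[OF unitary_block_diag[OF b U] this]
  have "mfun f (block_diag g M) =
      block_diag g U ** rdiag (\<lambda>i. if D i = 0 then 0 else f (D i)) ** adj (block_diag g U)" .
  also have "\<dots> = block_diag g (\<lambda>x. U x ** rdiag (\<lambda>m. if d x m = 0 then 0 else f (d x m)) ** adj (U x))"
    unfolding D_def block_diag_adj block_diag_mult[OF b]
    by (subst block_diag_rdiag[OF bij_is_inj[OF b], symmetric]) (simp only: block_diag_mult[OF b])
  also have "\<dots> = block_diag g (\<lambda>x. mfun f (M x))" using mfun_spectral[OF U M] by simp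
  finally show ?thesis .
qed

lemma mtrace_block_diag:
  assumes b: "bij g"
  shows "mtrace (block_diag g M) = (\<Sum>x\<in>UNIV. mtrace (M x))"
proof -
  have gi: "g (inv g q) = q" for q using b by (simp add: bij_is_surj surj_f_inv_f)
  have "mtrace (block_diag g M) = (\<Sum>m\<in>UNIV. \<Sum>x\<in>UNIV. block_diag g M $ inv g (m,x) $ inv g (m,x))"
    unfolding mtrace_def by (rule sum_UNIV_bij_reindex[OF b])
  also have "\<dots> = (\<Sum>x\<in>UNIV. mtrace (M x))"
    unfolding mtrace_def by (simp add: block_diag_entry gi) (rule sum.swap)
  finally show ?thesis .
qed

lemma mpow_block_diag_scaleR:
  assumes "bij g" and "\<And>x. hermitian (A x)" and "\<And>x. r x \<ge> 0"
  shows "mpow (block_diag g (\<lambda>x. r x *\<^sub>R A x)) q = block_diag g (\<lambda>x. (r x powr q) *\<^sub>R mpow (A x) q)"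
  using mpow_scaleR[OF assms(2,3)] mfun_block_diag[OF assms(1) hermitian_scaleR[OF assms(2)]]
  unfolding mpow_def by simp

definition regroup3 :: "'a \<times> 'b \<times> 'c \<times> 'x \<Rightarrow> ('a \<times> 'b \<times> 'c) \<times> 'x" where
  "regroup3 = (\<lambda>(a,b,c,x). ((a,b,c),x))"

definition regroup2 :: "'u \<times> 'c \<times> 'x \<Rightarrow> ('u \<times> 'c) \<times> 'x" where
  "regroup2 = (\<lambda>(u,c,x). ((u,c),x))"

lemma bij_regroup3: "bij regroup3"
  unfolding bij_def inj_def surj_def regroup3_def by (auto simp: split_paired_all)

lemma bij_regroup2: "bij regroup2"
  unfolding bij_def inj_def surj_def regroup2_def by (auto simp: split_paired_all)

lemma block_diag_regroup3_entry:
  "block_diag regroup3 M $ (a,b,c,x) $ (a',b',c',x') = (if x = x' then M x $ (a,b,c) $ (a',b',c') else 0)"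
  by (simp add: block_diag_entry regroup3_def)

lemma block_diag_regroup2_entry:
  "block_diag regroup2 M $ (u,c,x) $ (u',c',x') = (if x = x' then M x $ (u,c) $ (u',c') else 0)"
  by (simp add: block_diag_entry regroup2_def)

lemma block_diag_id_entry:
  "block_diag id M $ (c,x) $ (c',x') = (if x = x' then M x $ c $ c' else 0)"
  by (simp add: block_diag_entry)

lemma cq_state_block_diag: "cq_state p \<rho>x = block_diag regroup3 (\<lambda>x. p x *\<^sub>R \<rho>x x)"
  by (simp add: vec_eq_iff split_paired_all cq_state_def block_diag_regroup3_entry
      scaleR_conv_of_real[where 'a=complex])

lemma ptrB_block_diag: "ptrB (block_diag regroup3 M) = block_diag regroup2 (\<lambda>x. ptrB (M x))"
  by (simp add: vec_eq_iff split_paired_all ptrB_entry block_diag_regroup3_entry block_diag_regroup2_entry)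

lemma ptrA_block_diag: "ptrA (block_diag regroup2 M) = block_diag id (\<lambda>x. ptrA (M x))"
  by (simp add: vec_eq_iff split_paired_all ptrA_entry block_diag_id_entry block_diag_regroup2_entry)

lemma extB_block_diag: "extB (block_diag regroup2 P) = block_diag regroup3 (\<lambda>x. extB (P x))"
  by (simp add: vec_eq_iff split_paired_all extB_entry block_diag_regroup3_entry block_diag_regroup2_entry)

lemma ptrA_ABE_block_diag: "ptrA_ABE (block_diag regroup3 M) = block_diag regroup2 (\<lambda>x. ptrA_ABE (M x))"
  by (simp add: vec_eq_iff split_paired_all ptrA_ABE_entry block_diag_regroup3_entry
      block_diag_regroup2_entry)

lemma extB'_block_diag: "extB' (block_diag id P) = block_diag regroup2 (\<lambda>x. extB' (P x))"
  by (simp add: vec_eq_iff split_paired_all extB'_entry block_diag_id_entry block_diag_regroup2_entry)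

section \<open>Renyi conditional mutual information of a cq state\<close>

definition renyi_inner :: "real \<Rightarrow> ('a::finite \<times> 'b::finite \<times> 'e::finite) op \<Rightarrow> ('b \<times> 'e) op" where
  "renyi_inner \<alpha> \<rho> = ptrA_ABE (extB (mpow (ptrB \<rho>) ((1 - \<alpha>) / 2)) ** mpow \<rho> \<alpha>
                                 ** extB (mpow (ptrB \<rho>) ((1 - \<alpha>) / 2)))"

definition renyi_outer :: "real \<Rightarrow> ('a::finite \<times> 'b::finite \<times> 'e::finite) op \<Rightarrow> ('b \<times> 'e) op" where
  "renyi_outer \<alpha> \<rho> = extB' (mpow (ptrA (ptrB \<rho>)) ((\<alpha> - 1) / 2)) ** renyi_inner \<alpha> \<rho>
                       ** extB' (mpow (ptrA (ptrB \<rho>)) ((\<alpha> - 1) / 2))"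

definition renyi_trace :: "real \<Rightarrow> ('a::finite \<times> 'b::finite \<times> 'e::finite) op \<Rightarrow> real" where
  "renyi_trace \<alpha> \<rho> = Re (mtrace (mpow (renyi_outer \<alpha> \<rho>) (1 / \<alpha>)))"

lemma renyi_cmi_renyi_trace: "renyi_cmi \<alpha> \<rho> = \<alpha> / (\<alpha> - 1) * ln (renyi_trace \<alpha> \<rho>)"
  unfolding renyi_cmi_def renyi_trace_def renyi_outer_def renyi_inner_def Let_def ..

lemma hermitian_renyi_outer: "hermitian \<rho> \<Longrightarrow> hermitian (renyi_outer \<alpha> \<rho>)"
  unfolding renyi_outer_def renyi_inner_def
  by (intro hermitian_sandwich hermitian_extB' hermitian_mpow hermitian_ptrA hermitian_ptrB
      hermitian_ptrA_ABE hermitian_extB)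

text \<open>If the inner operator vanished, so would tr(X \<rho>^\<alpha> X) with X = \<rho>_AE^((1-\<alpha>)/2) \<otimes> I_B;
  then X \<rho>^\<alpha> = 0, and multiplying by the inverse of X on its support gives \<rho>^\<alpha> = 0.\<close>
lemma renyi_inner_nonzero:
  fixes \<rho> :: "('a::finite \<times> 'b::finite \<times> 'e::finite) op"
  assumes q: "qstate \<rho>"
  shows "renyi_inner \<alpha> \<rho> \<noteq> 0"
proof
  assume inner0: "renyi_inner \<alpha> \<rho> = 0"
  have psd: "psd \<rho>" and h: "hermitian \<rho>" using q unfolding qstate_def psd_def by simp_all
  have hAE: "hermitian (ptrB \<rho>)" by (rule hermitian_ptrB[OF h])
  define t where "t = (1 - \<alpha>) / 2"
  define X :: "('a \<times> 'b \<times> 'e) op" where "X = extB (mpow (ptrB \<rho>) t)"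
  define N where "N = mpow \<rho> \<alpha>"
  have hX: "hermitian X" unfolding X_def by (intro hermitian_extB hermitian_mpow hAE)
  have hN: "hermitian N" unfolding N_def by (intro hermitian_mpow h)
  have "mtrace (X ** N ** X) = mtrace (renyi_inner \<alpha> \<rho>)"
    unfolding renyi_inner_def mtrace_ptrA_ABE X_def N_def t_def ..
  hence "Re (mtrace (X ** N ** X)) = 0" using inner0 by simp
  hence "N ** X = 0" using psd_sandwich_trace_zero[OF psd_mpow[OF h] hX] unfolding N_def by blast
  hence XN: "X ** N = 0" using hermitian_mult_adj[OF hN hX] by simp
  have "extB (mpow (ptrB \<rho>) (- t)) ** X = extB (support_proj (ptrB \<rho>))"
    unfolding X_def extB_mult mpow_uminus_mult[OF hAE] ..
  hence "extB (support_proj (ptrB \<rho>)) ** N = 0" using XN by (metis matrix_mul_assoc times0_right)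
  moreover have "extB (support_proj (ptrB \<rho>)) ** N = N"
    unfolding N_def mpow_def by (rule mfun_absorb[OF h extB_support_proj_ptrB[OF psd]])
  ultimately have "\<rho> = 0" using mpow_eq_0_imp[OF h] unfolding N_def by simp
  thus False using q unfolding qstate_def mtrace_def by simp
qed

text \<open>The outer sandwich by \<rho>_E^((\<alpha>-1)/2) can be undone up to the support projection of \<rho>_E,
  which acts as the identity on the inner operator.\<close>
lemma renyi_outer_nonzero:
  fixes \<rho> :: "('a::finite \<times> 'b::finite \<times> 'e::finite) op"
  assumes q: "qstate \<rho>"
  shows "renyi_outer \<alpha> \<rho> \<noteq> 0"
proof
  assume outer0: "renyi_outer \<alpha> \<rho> = 0"
  have psd: "psd \<rho>" and h: "hermitian \<rho>" using q unfolding qstate_def psd_def by simp_all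
  have hAE: "hermitian (ptrB \<rho>)" and hE: "hermitian (ptrA (ptrB \<rho>))"
    by (intro hermitian_ptrA hermitian_ptrB h)+
  define t where "t = (1 - \<alpha>) / 2"
  define X :: "('a \<times> 'b \<times> 'e) op" where "X = extB (mpow (ptrB \<rho>) t)"
  define Q :: "('a \<times> 'b \<times> 'e) op" where "Q = extB (extB' (support_proj (ptrA (ptrB \<rho>))))"
  define G :: "('b \<times> 'e) op" where "G = extB' (mpow (ptrA (ptrB \<rho>)) t)"
  define Y :: "('b \<times> 'e) op" where "Y = extB' (mpow (ptrA (ptrB \<rho>)) (- t))"
  have hQ: "hermitian Q" unfolding Q_def
    by (intro hermitian_extB hermitian_extB' hermitian_support_proj hE)
  have hX: "hermitian X" unfolding X_def by (intro hermitian_extB hermitian_mpow hAE)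
  have QX: "Q ** X = X"
    unfolding Q_def X_def extB_mult mpow_def
    using mfun_absorb[OF hAE extB'_support_proj_ptrA_mult[OF psd]] by simp
  have XQ: "X ** Q = X" by (rule hermitian_absorb_right[OF hQ hX QX])
  have GY: "G ** Y = extB' (support_proj (ptrA (ptrB \<rho>)))"
      "Y ** G = extB' (support_proj (ptrA (ptrB \<rho>)))"
    unfolding G_def Y_def extB'_mult mpow_uminus_mult[OF hE] by simp_all
  have "renyi_inner \<alpha> \<rho> = extB' (support_proj (ptrA (ptrB \<rho>))) ** renyi_inner \<alpha> \<rho>
                           ** extB' (support_proj (ptrA (ptrB \<rho>)))"
    unfolding renyi_inner_def extB'_mult_ptrA_ABE ptrA_ABE_mult_extB' Q_def[symmetric]
      X_def[symmetric, unfolded t_def] matrix_mul_assoc QX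
    by (simp only: matrix_mul_assoc[symmetric] XQ)
  also have "\<dots> = (G ** Y) ** renyi_inner \<alpha> \<rho> ** (Y ** G)" by (simp only: GY)
  also have "\<dots> = G ** renyi_outer \<alpha> \<rho> ** G"
    unfolding renyi_outer_def Y_def t_def by (simp add: matrix_mul_assoc minus_divide_left)
  finally show False using outer0 renyi_inner_nonzero[OF q] by simp
qed

lemma renyi_trace_pos: "qstate \<rho> \<Longrightarrow> renyi_trace \<alpha> \<rho> > 0"
  unfolding renyi_trace_def
  by (intro mtrace_mpow_pos hermitian_renyi_outer renyi_outer_nonzero)
    (simp_all add: qstate_def psd_def)

lemma sandwich_scaleR:
  "((a::real) *\<^sub>R A) ** (b *\<^sub>R B) ** (c *\<^sub>R A) = (a * b * c) *\<^sub>R (A ** B ** (A :: 'n::finite op))"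
  by (simp add: scalar_matrix_assoc[symmetric] matrix_scalar_ac)

lemma renyi_sandwich_powr:
  assumes "(p::real) \<ge> 0"
  shows "p powr ((\<alpha> - 1) / 2) * (p powr ((1 - \<alpha>) / 2) * p powr \<alpha> * p powr ((1 - \<alpha>) / 2))
           * p powr ((\<alpha> - 1) / 2) = p powr \<alpha>"
proof (cases "p = 0")
  case False
  have "(\<alpha> - 1) / 2 + ((1 - \<alpha>) / 2 + \<alpha> + (1 - \<alpha>) / 2) + (\<alpha> - 1) / 2 = \<alpha>"
    by (simp add: field_simps)
  thus ?thesis by (metis powr_add)
qed simp

lemma renyi_outer_cq_state:
  fixes \<rho>x :: "'x::finite \<Rightarrow> ('a::finite \<times> 'b::finite \<times> 'c::finite) op"
  assumes p: "\<And>x. p x \<ge> 0" and h: "\<And>x. hermitian (\<rho>x x)"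
  shows "renyi_outer \<alpha> (cq_state p \<rho>x) = block_diag regroup2 (\<lambda>x. p x powr \<alpha> *\<^sub>R renyi_outer \<alpha> (\<rho>x x))"
proof -
  have hAE: "hermitian (ptrB (\<rho>x x))" and hE: "hermitian (ptrA (ptrB (\<rho>x x)))" for x
    by (intro hermitian_ptrA hermitian_ptrB h)+
  have AE: "ptrB (cq_state p \<rho>x) = block_diag regroup2 (\<lambda>x. p x *\<^sub>R ptrB (\<rho>x x))"
    unfolding cq_state_block_diag ptrB_block_diag ptrB_scaleR ..
  have E: "ptrA (block_diag regroup2 (\<lambda>x. p x *\<^sub>R ptrB (\<rho>x x))) =
      block_diag id (\<lambda>x. p x *\<^sub>R ptrA (ptrB (\<rho>x x)))"
    unfolding ptrA_block_diag ptrA_scaleR ..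
  have \<rho>: "mpow (cq_state p \<rho>x) \<alpha> = block_diag regroup3 (\<lambda>x. p x powr \<alpha> *\<^sub>R mpow (\<rho>x x) \<alpha>)"
    unfolding cq_state_block_diag mpow_block_diag_scaleR[OF bij_regroup3 h p] ..
  show ?thesis
    unfolding renyi_outer_def renyi_inner_def AE E \<rho>
      mpow_block_diag_scaleR[OF bij_regroup2 hAE p] mpow_block_diag_scaleR[OF bij_id hE p]
      extB_block_diag extB'_block_diag extB_scaleR extB'_scaleR
      block_diag_mult[OF bij_regroup3] block_diag_mult[OF bij_regroup2]
      ptrA_ABE_block_diag sandwich_scaleR ptrA_ABE_scaleR renyi_sandwich_powr[OF p] ..
qed

lemma renyi_trace_cq_state:
  fixes \<rho>x :: "'x::finite \<Rightarrow> ('a::finite \<times> 'b::finite \<times> 'c::finite) op"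
  assumes "\<alpha> > 0" and p: "\<And>x. p x \<ge> 0" and h: "\<And>x. hermitian (\<rho>x x)"
  shows "renyi_trace \<alpha> (cq_state p \<rho>x) = (\<Sum>x\<in>UNIV. p x * renyi_trace \<alpha> (\<rho>x x))"
proof -
  have "(p x powr \<alpha>) powr (1 / \<alpha>) = p x" for x
    using \<open>\<alpha> > 0\<close> p[of x] by (simp add: powr_powr)
  hence "mpow (renyi_outer \<alpha> (cq_state p \<rho>x)) (1 / \<alpha>) =
      block_diag regroup2 (\<lambda>x. p x *\<^sub>R mpow (renyi_outer \<alpha> (\<rho>x x)) (1 / \<alpha>))"
    unfolding renyi_outer_cq_state[OF p h]
    by (simp add: mpow_block_diag_scaleR[OF bij_regroup2 hermitian_renyi_outer[OF h]])
  thus ?thesis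
    unfolding renyi_trace_def by (simp add: mtrace_block_diag[OF bij_regroup2] mtrace_scaleR Re_sum)
qed

lemma exp_renyi_cmi:
  assumes "\<alpha> > 0" "\<alpha> \<noteq> 1" "qstate \<rho>"
  shows "exp ((\<alpha> - 1) / \<alpha> * renyi_cmi \<alpha> \<rho>) = renyi_trace \<alpha> \<rho>"
proof -
  have "(\<alpha> - 1) / \<alpha> * renyi_cmi \<alpha> \<rho> = ln (renyi_trace \<alpha> \<rho>)"
    unfolding renyi_cmi_renyi_trace using assms(1,2) by (simp add: field_simps)
  thus ?thesis using renyi_trace_pos[OF assms(3)] by simp
qed

theorem lemma3:
  fixes \<alpha> :: real
    and p :: "'x::finite \<Rightarrow> real"
    and \<rho>x :: "'x \<Rightarrow> ('a::finite \<times> 'b::finite \<times> 'c::finite) op"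
  assumes "0 < \<alpha>" and "\<alpha> \<noteq> 1"
    and "\<And>x. 0 \<le> p x" and "(\<Sum>x\<in>UNIV. p x) = 1"
    and "\<And>x. qstate (\<rho>x x)"
  shows "renyi_cmi \<alpha> (cq_state p \<rho>x) =
    \<alpha> / (\<alpha> - 1) * ln (\<Sum>x\<in>UNIV. p x * exp (((\<alpha> - 1) / \<alpha>) * renyi_cmi \<alpha> (\<rho>x x)))"
proof -
  have "hermitian (\<rho>x x)" for x using assms(5) unfolding qstate_def psd_def by simp
  hence "renyi_trace \<alpha> (cq_state p \<rho>x) = (\<Sum>x\<in>UNIV. p x * renyi_trace \<alpha> (\<rho>x x))"
    by (rule renyi_trace_cq_state[OF assms(1,3)])
  thus ?thesis
    unfolding renyi_cmi_renyi_trace[of \<alpha> "cq_state p \<rho>x"] exp_renyi_cmi[OF assms(1,2,5)] by simp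
qed

end
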